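(* Work in the ring $\mathcal O_{\mathbb{Q}(\sqrt{-3})}=\mathbb{Z}[\frac{1+\sqrt{-3}}{2}]$. If $a$ and $b$ are relatively prime positive integers and $3$ divides $a$ in $\mathbb{Z}$, then there is no nonzero $z\in\mathcal O_{\mathbb{Q}(\sqrt{-3})}$ with $I_2^*(z)=a/b$.
   Context: $\mathcal O_{\mathbb{Q}(\sqrt{-3})}$ is a unique factorization domain. $|z|=\sqrt{z\bar z}$, $\arg(z)\in[0,2\pi)$. Let $A$ be the set of nonzero $z\in\mathcal O_{\mathbb{Q}(\sqrt{-3})}$ with $0\le \arg(z)<\pi/3$. Two elements are relatively prime if they have no nonunit common divisor. For nonzero $x,z$, write $x\Diamond z$ iff $x\in A$, $x\mid z$, and $x$ is relatively prime to $z/x$. For $m\in\mathbb{Z}$ define $\delta_m^*(z)=\sum_{x\Diamond z}|x|^m$ and $I_m^*(z)=\delta_m^*(z)/|z|^m$. *)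

theory Defs
  imports "HOL-Analysis.Analysis"
begin

definition eis_omega :: complex where
  "eis_omega = Complex (1/2) (sqrt 3 / 2)"

definition Eis :: "complex set" where
  "Eis = {of_int m + of_int n * eis_omega | m n :: int. True}"

definition eis_dvd :: "complex \<Rightarrow> complex \<Rightarrow> bool" where
  "eis_dvd x z \<longleftrightarrow> (\<exists>w\<in>Eis. z = x * w)"

definition eis_unit :: "complex \<Rightarrow> bool" where
  "eis_unit u \<longleftrightarrow> u \<in> Eis \<and> eis_dvd u 1"

definition eis_rel_prime :: "complex \<Rightarrow> complex \<Rightarrow> bool" where
  "eis_rel_prime x y \<longleftrightarrow> (\<forall>d\<in>Eis. eis_dvd d x \<and> eis_dvd d y \<longrightarrow> eis_unit d)"

definition arg02 :: "complex \<Rightarrow> real" where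
  "arg02 z = (if Arg z < 0 then Arg z + 2 * pi else Arg z)"

definition eis_A :: "complex set" where
  "eis_A = {z \<in> Eis. z \<noteq> 0 \<and> 0 \<le> arg02 z \<and> arg02 z < pi / 3}"

definition eis_diamond :: "complex \<Rightarrow> complex \<Rightarrow> bool" where
  "eis_diamond x z \<longleftrightarrow> x \<noteq> 0 \<and> z \<noteq> 0 \<and> x \<in> eis_A \<and> eis_dvd x z \<and> eis_rel_prime x (z / x)"

definition delta_star :: "int \<Rightarrow> complex \<Rightarrow> real" where
  "delta_star m z = (\<Sum>x\<in>{x. eis_diamond x z}. cmod x powi m)"

definition I_star :: "int \<Rightarrow> complex \<Rightarrow> real" where
  "I_star m z = delta_star m z / cmod z powi m"

end

(*
  Identify O with Z[omega], omega = (1 + sqrt(-3))/2, and |x|^2 with the norm N(m + n omega) =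
  m^2 + m n + n^2. The sector 0 <= arg < pi/3 contains exactly one associate of every nonzero
  element, so delta*_2(z) is the sum of N(x) over the unitary divisors x of z, one from each
  class of associates. Splitting off a prime power p^k exactly dividing z shows that this sum
  is multiplied by 1 + N(p)^k. Since N(x) = (m - n)^2 + 3 m n is a square modulo 3, each such
  factor is 1 or 2 modulo 3, hence 3 does not divide delta*_2(z). But delta*_2(z) / N(z) = a / b
  with a, b coprime and 3 dividing a gives delta*_2(z) b = a N(z), so 3 would divide
  delta*_2(z).
*)
theory Submission
  imports Defs "HOL-Computational_Algebra.Primes"
begin

section \<open>Unitary divisors in factorial rings\<close>

definition unitary_divisors :: "'a::factorial_semiring_gcd \<Rightarrow> 'a set" where
  "unitary_divisors z = {x. normalize x = x \<and> (\<exists>y. z = x * y \<and> coprime x y)}"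

lemma unitary_divisors_unit:
  fixes z :: "'a::factorial_semiring_gcd"
  assumes "is_unit z"
  shows "unitary_divisors z = {1}"
proof
  show "unitary_divisors z \<subseteq> {1}"
  proof
    fix x
    assume "x \<in> unitary_divisors z"
    then obtain y where "normalize x = x" "z = x * y"
      by (auto simp: unitary_divisors_def)
    then show "x \<in> {1}"
      using assms normalize_idem_imp_is_unit_iff[of x] by (simp add: is_unit_mult_iff)
  qed
  show "{1} \<subseteq> unitary_divisors z"
    by (simp add: unitary_divisors_def)
qed

lemma unitary_divisor_mult_coprime:
  fixes c w :: "'a::factorial_semiring_gcd"
  assumes "coprime c w" "x \<in> unitary_divisors w"
  shows "x \<in> unitary_divisors (c * w)"
proof -
  from assms(2) obtain y where "normalize x = x" "w = x * y" "coprime x y"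
    by (auto simp: unitary_divisors_def)
  moreover have "coprime x c"
    using assms(1) \<open>w = x * y\<close> by (simp add: coprime_commute)
  ultimately show ?thesis
    unfolding unitary_divisors_def by (auto intro!: exI[of _ "c * y"] simp: mult_ac)
qed

lemma normalize_mult_unitary_divisor:
  fixes c w :: "'a::factorial_semiring_gcd"
  assumes "c * w \<noteq> 0" "coprime c w" "x \<in> unitary_divisors w"
  shows "normalize (c * x) \<in> unitary_divisors (c * w)"
proof -
  from assms(3) obtain y where "w = x * y" "coprime x y"
    by (auto simp: unitary_divisors_def)
  moreover have "coprime y c"
    using assms(2) \<open>w = x * y\<close> by (simp add: coprime_commute)
  moreover have "coprime (c * x) (unit_factor (c * x))"
    using assms(1) \<open>w = x * y\<close> by (intro is_unit_right_imp_coprime unit_factor_is_unit) auto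
  ultimately show ?thesis
    unfolding unitary_divisors_def
    by (auto intro!: exI[of _ "unit_factor (c * x) * y"] simp: mult_ac coprime_commute)
qed

lemma unitary_divisor_cancel_coprime:
  fixes c w :: "'a::factorial_semiring_gcd"
  assumes "c * w \<noteq> 0" "coprime x c" "x \<in> unitary_divisors (c * w)"
  shows "x \<in> unitary_divisors w"
proof -
  from assms(3) obtain y where x: "normalize x = x" and cw: "c * w = x * y" and "coprime x y"
    by (auto simp: unitary_divisors_def)
  then have "x dvd w"
    using assms(2) by (metis coprime_dvd_mult_right_iff dvd_triv_left)
  then obtain t where t: "w = x * t" ..
  have "x * y = x * (c * t)"
    using cw t by (simp add: mult_ac)
  then have "y = c * t"
    using assms(1) cw by simp
  then show ?thesis
    using x t \<open>coprime x y\<close> by (auto simp: unitary_divisors_def)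
qed

lemma unitary_divisor_cancel_dvd:
  fixes c w :: "'a::factorial_semiring_gcd"
  assumes "c * w \<noteq> 0" "c dvd x" "x \<in> unitary_divisors (c * w)"
  shows "x \<in> (\<lambda>x. normalize (c * x)) ` unitary_divisors w"
proof -
  from assms(3) obtain y where x: "normalize x = x" and cw: "c * w = x * y" and "coprime x y"
    by (auto simp: unitary_divisors_def)
  obtain x' where x': "x = c * x'"
    using assms(2) ..
  have w: "w = x' * y"
    using assms(1) cw by (simp add: x' mult.assoc)
  moreover have "coprime x' (unit_factor x')"
    using assms(1) w by (intro is_unit_right_imp_coprime unit_factor_is_unit) auto
  ultimately have "normalize x' \<in> unitary_divisors w"
    using \<open>coprime x y\<close> unfolding unitary_divisors_def
    by (auto intro!: exI[of _ "unit_factor x' * y"] simp: x' mult_ac)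
  moreover have "x = normalize (c * normalize x')"
    using x x' by simp
  ultimately show ?thesis
    by blast
qed

lemma unitary_divisors_mult_prime_power:
  fixes w :: "'a::factorial_semiring_gcd"
  assumes p: "prime p" and "\<not> p dvd w"
  shows "unitary_divisors (p ^ k * w)
    = unitary_divisors w \<union> (\<lambda>x. normalize (p ^ k * x)) ` unitary_divisors w"
proof -
  have nonzero: "p ^ k * w \<noteq> 0"
    using p \<open>\<not> p dvd w\<close> by auto
  have coprime: "coprime (p ^ k) w"
    using prime_imp_power_coprime[OF p \<open>\<not> p dvd w\<close>] by (simp add: coprime_commute)
  have "x \<in> unitary_divisors w \<union> (\<lambda>x. normalize (p ^ k * x)) ` unitary_divisors w"
    if x: "x \<in> unitary_divisors (p ^ k * w)" for x
  proof (cases "p dvd x")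
    case True
    from x obtain y where "p ^ k * w = x * y" "coprime x y"
      by (auto simp: unitary_divisors_def)
    then have "\<not> p dvd y"
      using True p by (meson coprime_common_divisor not_prime_unit)
    then have "p ^ k dvd x"
      using \<open>p ^ k * w = x * y\<close> prime_imp_power_coprime[OF p, of y]
      by (metis coprime_commute coprime_dvd_mult_left_iff dvd_triv_left)
    then show ?thesis
      using unitary_divisor_cancel_dvd[OF nonzero _ x] by blast
  next
    case False
    then show ?thesis
      using unitary_divisor_cancel_coprime[OF nonzero _ x] prime_imp_power_coprime[OF p] by blast
  qed
  then show ?thesis
    using unitary_divisor_mult_coprime[OF coprime] normalize_mult_unitary_divisor[OF nonzero coprime]
    by blast
qed

lemma inj_on_normalize_mult:
  fixes a :: "'a::normalization_semidom"
  assumes "a \<noteq> 0"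
  shows "inj_on (\<lambda>x. normalize (a * x)) {x. normalize x = x}"
proof
  fix x y
  assume "x \<in> {x. normalize x = x}" "y \<in> {x. normalize x = x}"
    and "normalize (a * x) = normalize (a * y)"
  then have "x dvd y" "y dvd x"
    using assms by (simp_all add: associated_iff_dvd)
  then have "normalize x = normalize y"
    by (rule associatedI)
  then show "x = y"
    using \<open>x \<in> _\<close> \<open>y \<in> _\<close> by simp
qed

lemma multiplicative_normalize_eq:
  fixes g :: "'a::normalization_semidom \<Rightarrow> 'b::monoid_mult"
  assumes "\<And>x y. g (x * y) = g x * g y" and "\<And>u. is_unit u \<Longrightarrow> g u = 1"
  shows "g (normalize x) = g x"
proof (cases "x = 0")
  case False
  then show ?thesis
    using assms(1)[of "unit_factor x" "normalize x"] assms(2)[OF unit_factor_is_unit[OF False]]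
    by simp
qed simp

lemma sum_unitary_divisors_mult_prime_power:
  fixes g :: "'a::factorial_semiring_gcd \<Rightarrow> 'b::comm_semiring_1"
  assumes g_mult: "\<And>x y. g (x * y) = g x * g y" and g_unit: "\<And>u. is_unit u \<Longrightarrow> g u = 1"
    and p: "prime p" and "\<not> p dvd w" "0 < k" "finite (unitary_divisors w)"
  shows "finite (unitary_divisors (p ^ k * w))"
    and "(\<Sum>x\<in>unitary_divisors (p ^ k * w). g x) = (1 + g (p ^ k)) * (\<Sum>x\<in>unitary_divisors w. g x)"
proof -
  let ?f = "\<lambda>x. normalize (p ^ k * x)"
  have U: "unitary_divisors (p ^ k * w) = unitary_divisors w \<union> ?f ` unitary_divisors w"
    using p \<open>\<not> p dvd w\<close> by (rule unitary_divisors_mult_prime_power)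
  then show "finite (unitary_divisors (p ^ k * w))"
    using \<open>finite (unitary_divisors w)\<close> by simp
  have divides_w: "x dvd w" if "x \<in> unitary_divisors w" for x
    using that by (auto simp: unitary_divisors_def)
  have "?f x \<notin> unitary_divisors w" for x
  proof
    assume "?f x \<in> unitary_divisors w"
    moreover have "p dvd ?f x"
      using \<open>0 < k\<close> by (simp add: dvd_mult2)
    ultimately show False
      using divides_w \<open>\<not> p dvd w\<close> dvd_trans by blast
  qed
  then have disjoint: "unitary_divisors w \<inter> ?f ` unitary_divisors w = {}"
    by blast
  have inj: "inj_on ?f (unitary_divisors w)"
  proof (rule inj_on_subset)
    show "inj_on ?f {x. normalize x = x}"
      using p by (intro inj_on_normalize_mult) auto
  qed (auto simp: unitary_divisors_def)
  have g_f: "g (?f x) = g (p ^ k) * g x" for x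
    using multiplicative_normalize_eq[of g, OF g_mult g_unit] by (simp add: g_mult)
  have "(\<Sum>x\<in>unitary_divisors (p ^ k * w). g x)
      = (\<Sum>x\<in>unitary_divisors w. g x) + (\<Sum>x\<in>?f ` unitary_divisors w. g x)"
    unfolding U by (rule sum.union_disjoint) (use \<open>finite (unitary_divisors w)\<close> disjoint in auto)
  also have "(\<Sum>x\<in>?f ` unitary_divisors w. g x) = (\<Sum>x\<in>unitary_divisors w. g (?f x))"
    using inj by (simp add: sum.reindex)
  also have "\<dots> = g (p ^ k) * (\<Sum>x\<in>unitary_divisors w. g x)"
    by (simp add: g_f sum_distrib_left)
  finally show "(\<Sum>x\<in>unitary_divisors (p ^ k * w). g x) = (1 + g (p ^ k)) * (\<Sum>x\<in>unitary_divisors w. g x)"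
    by (simp add: distrib_right)
qed

lemma prime_not_dvd_sum_unitary_divisors:
  fixes g :: "'a::factorial_semiring_gcd \<Rightarrow> 'b::factorial_semiring" and z :: 'a
  assumes g_mult: "\<And>x y. g (x * y) = g x * g y" and g_unit: "\<And>u. is_unit u \<Longrightarrow> g u = 1"
    and q: "prime q" and q_prime_powers: "\<And>p k. prime p \<Longrightarrow> 0 < k \<Longrightarrow> \<not> q dvd 1 + g (p ^ k)"
    and "z \<noteq> 0"
  shows "finite (unitary_divisors z) \<and> \<not> q dvd (\<Sum>x\<in>unitary_divisors z. g x)"
  using \<open>z \<noteq> 0\<close>
proof (induction "size (prime_factorization z)" arbitrary: z rule: less_induct)
  case less
  show ?case
  proof (cases "is_unit z")
    case True
    then show ?thesis
      using q g_unit[of 1] by (simp add: unitary_divisors_unit)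
  next
    case False
    obtain p where p: "prime p" "p dvd z"
      using prime_divisor_exists[OF less.prems False] by blast
    define k where "k = multiplicity p z"
    obtain w where z: "z = p ^ k * w" and "\<not> p dvd w"
      unfolding k_def by (rule multiplicity_decompose') (use less.prems p(1) in auto)
    have "w \<noteq> 0" "0 < k"
      using less.prems z \<open>\<not> p dvd w\<close> p(2) by (auto intro: Nat.gr0I)
    then have "size (prime_factorization z) = k + size (prime_factorization w)"
      using p(1) by (simp add: z prime_factorization_mult prime_factorization_prime_power)
    then have "finite (unitary_divisors w) \<and> \<not> q dvd (\<Sum>x\<in>unitary_divisors w. g x)"
      using less.hyps \<open>w \<noteq> 0\<close> \<open>0 < k\<close> by simp
    moreover have "\<not> q dvd 1 + g (p ^ k)"
      using q_prime_powers p(1) \<open>0 < k\<close> .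
    ultimately show ?thesis
      using sum_unitary_divisors_mult_prime_power[OF g_mult g_unit p(1) \<open>\<not> p dvd w\<close> \<open>0 < k\<close>] q
      by (simp add: z prime_dvd_mult_iff)
  qed
qed

section \<open>The Eisenstein integers as a Euclidean ring\<close>

datatype eis = EI int int

instantiation eis :: comm_ring_1
begin

definition "0 = EI 0 0"
definition "1 = EI 1 0"

fun plus_eis :: "eis \<Rightarrow> eis \<Rightarrow> eis" where
  "EI a b + EI c d = EI (a + c) (b + d)"

fun uminus_eis :: "eis \<Rightarrow> eis" where
  "- EI a b = EI (- a) (- b)"

fun minus_eis :: "eis \<Rightarrow> eis \<Rightarrow> eis" where
  "EI a b - EI c d = EI (a - c) (b - d)"

(* (a + b omega) (c + d omega), using omega^2 = omega - 1 *)
fun times_eis :: "eis \<Rightarrow> eis \<Rightarrow> eis" where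
  "EI a b * EI c d = EI (a * c - b * d) (a * d + b * c + b * d)"

instance
proof
  fix x y z :: eis
  show "x * y * z = x * (y * z)" "x * y = y * x" "(x + y) * z = x * z + y * z"
    by (cases x; cases y; cases z; simp add: algebra_simps)+
  show "x + y + z = x + (y + z)" "x + y = y + x"
    by (cases x; cases y; cases z; simp)+
  show "0 + x = x" "1 * x = x" "- x + x = 0" "x - y = x + - y"
    by (cases x; cases y; simp add: zero_eis_def one_eis_def)+
  show "(0::eis) \<noteq> 1"
    by (simp add: zero_eis_def one_eis_def)
qed

end

lemma eis_omega_sq: "eis_omega * eis_omega = eis_omega - 1"
  by (simp add: eis_omega_def complex_eq_iff)

fun cx :: "eis \<Rightarrow> complex" where
  "cx (EI m n) = of_int m + of_int n * eis_omega"

lemma cx_0 [simp]: "cx 0 = 0" and cx_1 [simp]: "cx 1 = 1"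
  by (simp_all add: zero_eis_def one_eis_def)

lemma cx_mult [simp]: "cx (x * y) = cx x * cx y"
proof -
  obtain a b c d where xy: "x = EI a b" "y = EI c d"
    by (cases x; cases y) blast
  have "cx x * cx y = of_int (a * c) + of_int (a * d + b * c) * eis_omega
      + of_int (b * d) * (eis_omega * eis_omega)"
    by (simp add: xy algebra_simps)
  then show ?thesis
    by (simp add: xy eis_omega_sq algebra_simps)
qed

lemma Re_cx: "Re (cx (EI m n)) = m + n / 2"
  and Im_cx: "Im (cx (EI m n)) = n * sqrt 3 / 2"
  by (simp_all add: eis_omega_def)

lemma cx_inject [simp]: "cx x = cx y \<longleftrightarrow> x = y"
proof
  assume eq: "cx x = cx y"
  obtain a b c d where xy: "x = EI a b" "y = EI c d"
    by (cases x; cases y) blast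
  have "b * sqrt 3 / 2 = d * sqrt 3 / 2"
    using arg_cong[OF eq, of Im] unfolding xy Im_cx .
  moreover have "a + b / 2 = c + d / (2::real)"
    using arg_cong[OF eq, of Re] unfolding xy Re_cx .
  ultimately show "x = y"
    by (simp add: xy)
qed simp

lemma Eis_eq_range_cx: "Eis = range cx"
proof -
  have "of_int m + of_int n * eis_omega \<in> range cx" for m n
    using cx.simps[of m n] by (metis rangeI)
  moreover have "cx x \<in> Eis" for x
    by (cases x) (auto simp: Eis_def)
  ultimately show ?thesis
    unfolding Eis_def by blast
qed

fun eis_norm :: "eis \<Rightarrow> int" where
  "eis_norm (EI m n) = m\<^sup>2 + m * n + n\<^sup>2"

lemma of_int_eis: "of_int k = EI k 0"
  by (induction k rule: int_induct[of _ 0]) (simp_all add: zero_eis_def one_eis_def)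

lemma eis_norm_mult: "eis_norm (x * y) = eis_norm x * eis_norm y"
  by (cases x; cases y) (simp add: power2_eq_square algebra_simps)

lemma four_eis_norm: "4 * eis_norm (EI m n) = (2 * m + n)\<^sup>2 + 3 * n\<^sup>2"
  by (simp add: power2_eq_square algebra_simps)

lemma eis_norm_nonneg: "0 \<le> eis_norm x"
proof (cases x)
  case (EI m n)
  show ?thesis
    using four_eis_norm[of m n] zero_le_power2[of "2 * m + n"] zero_le_power2[of n]
    unfolding EI by linarith
qed

lemma cmod_cx_sq: "(cmod (cx x))\<^sup>2 = of_int (eis_norm x)"
proof (cases x)
  case (EI m n)
  have "(cmod (cx x))\<^sup>2 = (m + n / 2)\<^sup>2 + (n * sqrt 3 / 2)\<^sup>2"
    unfolding EI cmod_power2 Re_cx Im_cx ..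
  then show ?thesis
    by (simp add: EI power2_eq_square field_simps)
qed

lemma eis_norm_eq_0_iff [simp]: "eis_norm x = 0 \<longleftrightarrow> x = 0"
proof (cases x)
  case (EI m n)
  have "eis_norm x = 0 \<longleftrightarrow> (2 * m + n)\<^sup>2 + 3 * n\<^sup>2 = 0"
    using four_eis_norm[of m n] unfolding EI by linarith
  also have "\<dots> \<longleftrightarrow> 2 * m + n = 0 \<and> n = 0"
    by (simp add: add_nonneg_eq_0_iff)
  finally show ?thesis
    by (auto simp: EI zero_eis_def)
qed

lemma eis_norm_1 [simp]: "eis_norm 1 = 1"
  by (simp add: one_eis_def)

lemma eis_norm_pos: "x \<noteq> 0 \<Longrightarrow> 0 < eis_norm x"
  using eis_norm_nonneg[of x] by (simp add: order_less_le)

instance eis :: idom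
proof
  fix x y :: eis
  assume "x \<noteq> 0" "y \<noteq> 0"
  then show "x * y \<noteq> 0"
    by (simp flip: eis_norm_eq_0_iff add: eis_norm_mult)
qed

fun eis_cnj :: "eis \<Rightarrow> eis" where
  "eis_cnj (EI m n) = EI (m + n) (- n)"

lemma eis_norm_cnj: "eis_norm (eis_cnj x) = eis_norm x"
  by (cases x) (simp add: power2_eq_square algebra_simps)

lemma mult_eis_cnj: "x * eis_cnj x = of_int (eis_norm x)"
  by (cases x) (simp add: of_int_eis power2_eq_square algebra_simps)

(* p / M rounded to the nearest integer *)
definition round_div :: "int \<Rightarrow> int \<Rightarrow> int" where
  "round_div p M = (2 * p + M) div (2 * M)"

lemma round_div_mult:
  assumes "0 < M"
  shows "round_div (m * M) M = m"
proof -
  have "(2 * m + 1) * M div (2 * M) = (2 * m + 1) div 2"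
    using assms by (simp only: div_mult_mult2)
  then show ?thesis
    by (simp add: round_div_def algebra_simps)
qed

lemma round_div_error:
  assumes "0 < M"
  shows "2 * \<bar>p - round_div p M * M\<bar> \<le> M"
proof -
  have "(2 * p + M) mod (2 * M) = 2 * (p - round_div p M * M) + M"
    unfolding round_div_def by (simp add: minus_div_mult_eq_mod[symmetric] algebra_simps)
  moreover have "0 \<le> (2 * p + M) mod (2 * M)" "(2 * p + M) mod (2 * M) < 2 * M"
    using assms by simp_all
  ultimately show ?thesis
    by linarith
qed

instantiation eis :: euclidean_ring
begin

(* Round x * eis_cnj y / N(y) to the nearest lattice point; an error of at most 1/2 in each
   coordinate leaves a remainder of norm at most 3/4 N(y). *)
definition divide_eis :: "eis \<Rightarrow> eis \<Rightarrow> eis" where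
  "x div y = (case x * eis_cnj y of
     EI p q \<Rightarrow> EI (round_div p (eis_norm y)) (round_div q (eis_norm y)))"

definition modulo_eis :: "eis \<Rightarrow> eis \<Rightarrow> eis" where
  "modulo_eis x y = x - x div y * y"

definition euclidean_size_eis :: "eis \<Rightarrow> nat" where
  "euclidean_size x = nat (eis_norm x)"

lemma eis_norm_mod_less:
  assumes "y \<noteq> 0"
  shows "eis_norm (x mod y) < eis_norm y"
proof -
  define M where "M = eis_norm y"
  have M: "0 < M"
    using eis_norm_pos[OF assms] by (simp add: M_def)
  obtain p q where pq: "x * eis_cnj y = EI p q"
    by (cases "x * eis_cnj y") blast
  define e1 e2 where "e1 = p - round_div p M * M" and "e2 = q - round_div q M * M"
  have "x mod y * eis_cnj y = x * eis_cnj y - x div y * (y * eis_cnj y)"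
    by (simp add: modulo_eis_def algebra_simps)
  also have "\<dots> = EI p q - EI (round_div p M) (round_div q M) * EI M 0"
    unfolding divide_eis_def mult_eis_cnj of_int_eis pq M_def by (simp only: eis.case)
  also have "\<dots> = EI e1 e2"
    by (simp add: e1_def e2_def)
  finally have "eis_norm (x mod y * eis_cnj y) = eis_norm (EI e1 e2)"
    by (rule arg_cong)
  then have "eis_norm (x mod y) * M = e1\<^sup>2 + e1 * e2 + e2\<^sup>2"
    by (simp add: eis_norm_mult eis_norm_cnj M_def)
  also have "4 * \<dots> \<le> 3 * M\<^sup>2"
  proof -
    have e: "2 * \<bar>e1\<bar> \<le> M" "2 * \<bar>e2\<bar> \<le> M"
      using round_div_error[OF M] by (simp_all add: e1_def e2_def)
    have "(2 * \<bar>e1\<bar>) * (2 * \<bar>e1\<bar>) \<le> M * M" "(2 * \<bar>e2\<bar>) * (2 * \<bar>e2\<bar>) \<le> M * M"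
      "(2 * \<bar>e1\<bar>) * (2 * \<bar>e2\<bar>) \<le> M * M"
      by (rule mult_mono; use e in simp)+
    moreover have "e1 * e2 \<le> \<bar>e1\<bar> * \<bar>e2\<bar>"
      by (simp flip: abs_mult)
    ultimately show ?thesis
      by (simp add: power2_eq_square abs_mult_self_eq algebra_simps)
  qed
  finally have "4 * eis_norm (x mod y) * M < 4 * M * M"
    using M by (simp add: power2_eq_square algebra_simps)
  then show ?thesis
    using M by (simp add: M_def)
qed

lemma eis_mult_div_cancel:
  fixes x y :: eis
  assumes "y \<noteq> 0"
  shows "x * y div y = x"
proof (cases x)
  case (EI m n)
  define M where "M = eis_norm y"
  have M: "0 < M"
    using eis_norm_pos[OF assms] by (simp add: M_def)
  have "x * y * eis_cnj y = x * of_int M"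
    by (simp add: mult.assoc mult_eis_cnj M_def)
  also have "\<dots> = EI (m * M) (n * M)"
    unfolding EI of_int_eis by simp
  finally have "x * y div y = EI (round_div (m * M) M) (round_div (n * M) M)"
    unfolding divide_eis_def M_def by (simp only: eis.case)
  then show ?thesis
    by (simp only: round_div_mult[OF M] EI)
qed

instance
proof
  fix x y :: eis
  show "x div y * y + x mod y = x"
    by (simp add: modulo_eis_def)
  show "x div 0 = 0"
    by (cases x) (simp add: divide_eis_def zero_eis_def round_div_def)
  show "euclidean_size (0::eis) = 0"
    by (simp add: euclidean_size_eis_def zero_eis_def)
  assume "y \<noteq> 0"
  then have M: "0 < eis_norm y"
    by (rule eis_norm_pos)
  show "x * y div y = x"
    using \<open>y \<noteq> 0\<close> by (rule eis_mult_div_cancel)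
  show "euclidean_size (x mod y) < euclidean_size y"
    using eis_norm_mod_less[OF \<open>y \<noteq> 0\<close>] M by (simp add: euclidean_size_eis_def)
  have "eis_norm x * 1 \<le> eis_norm x * eis_norm y"
    using M eis_norm_nonneg[of x] by (intro mult_left_mono) simp_all
  then show "euclidean_size x \<le> euclidean_size (x * y)"
    by (simp add: euclidean_size_eis_def eis_norm_mult)
qed

end

lemma is_unit_iff_eis_norm: "is_unit x \<longleftrightarrow> eis_norm x = 1"
proof
  assume "is_unit x"
  then obtain y where "1 = x * y"
    by (rule dvdE)
  then have "eis_norm (x * y) = 1"
    by (metis eis_norm_1)
  then have "eis_norm x * eis_norm y = 1"
    by (simp add: eis_norm_mult)
  then show "eis_norm x = 1"
    using eis_norm_nonneg[of x] by (simp add: zmult_eq_1_iff)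
next
  assume "eis_norm x = 1"
  then have "x * eis_cnj x = 1"
    by (simp add: mult_eis_cnj)
  then show "is_unit x"
    by (rule dvdI[OF sym])
qed

lemma is_unit_EI_iff:
  "is_unit (EI m n) \<longleftrightarrow> (m, n) \<in> {(1, 0), (0, 1), (-1, 1), (-1, 0), (0, -1), (1, -1)}"
  unfolding is_unit_iff_eis_norm
proof
  assume norm: "eis_norm (EI m n) = 1"
  have "n\<^sup>2 \<le> 1"
    using four_eis_norm[of m n] norm zero_le_power2[of "2 * m + n"] by linarith
  moreover have "m\<^sup>2 \<le> 1"
  proof -
    have "4 * eis_norm (EI m n) = (2 * n + m)\<^sup>2 + 3 * m\<^sup>2"
      by (simp add: power2_eq_square algebra_simps)
    then show ?thesis
      using norm zero_le_power2[of "2 * n + m"] by linarith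
  qed
  ultimately have "m \<in> {-1, 0, 1}" "n \<in> {-1, 0, 1}"
    by (auto simp: abs_square_le_1)
  then show "(m, n) \<in> {(1, 0), (0, 1), (-1, 1), (-1, 0), (0, -1), (1, -1)}"
    using norm by (elim insertE emptyE) simp_all
qed auto

(* The elements with 0 <= arg < pi/3 (see cx_in_eis_A_iff); every nonzero element has exactly
   one associate in this sector, which serves as its normalisation. *)
fun in_sector :: "eis \<Rightarrow> bool" where
  "in_sector (EI m n) \<longleftrightarrow> 0 < m \<and> 0 \<le> n"

lemma in_sector_unit_multiple:
  assumes "x \<noteq> 0"
  obtains u where "is_unit u" "in_sector (u * x)"
proof (cases x)
  case (EI m n)
  have "m \<noteq> 0 \<or> n \<noteq> 0"
    using assms by (auto simp: EI zero_eis_def)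
  then consider "0 < m \<and> 0 \<le> n" | "0 < - n \<and> 0 \<le> m + n" | "0 < - m - n \<and> 0 \<le> m"
    | "0 < - m \<and> 0 \<le> - n" | "0 < n \<and> 0 \<le> - m - n" | "0 < m + n \<and> 0 \<le> - m"
    by linarith
  then show ?thesis
  proof cases
    case 1 show ?thesis by (rule that[of "EI 1 0"]) (use 1 in \<open>simp_all add: is_unit_EI_iff EI\<close>)
  next
    case 2 show ?thesis by (rule that[of "EI 0 1"]) (use 2 in \<open>simp_all add: is_unit_EI_iff EI\<close>)
  next
    case 3 show ?thesis by (rule that[of "EI (-1) 1"]) (use 3 in \<open>simp_all add: is_unit_EI_iff EI\<close>)
  next
    case 4 show ?thesis by (rule that[of "EI (-1) 0"]) (use 4 in \<open>simp_all add: is_unit_EI_iff EI\<close>)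
  next
    case 5 show ?thesis by (rule that[of "EI 0 (-1)"]) (use 5 in \<open>simp_all add: is_unit_EI_iff EI\<close>)
  next
    case 6 show ?thesis by (rule that[of "EI 1 (-1)"]) (use 6 in \<open>simp_all add: is_unit_EI_iff EI\<close>)
  qed
qed

lemma in_sector_unit_multiple_unique:
  assumes "in_sector x" "is_unit u" "in_sector (u * x)"
  shows "u = 1"
proof -
  obtain m n where x: "x = EI m n"
    by (cases x)
  obtain a b where u: "u = EI a b"
    by (cases u)
  have "(a, b) \<in> {(1, 0), (0, 1), (-1, 1), (-1, 0), (0, -1), (1, -1)}"
    using assms(2) by (simp add: u is_unit_EI_iff)
  then show ?thesis
    using assms(1,3) by (auto simp: x u one_eis_def)
qed

definition sector_unit :: "eis \<Rightarrow> eis" where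
  "sector_unit x = (THE u. is_unit u \<and> in_sector (u * x))"

lemma sector_unit_eqI:
  assumes "is_unit u" "in_sector (u * x)"
  shows "sector_unit x = u"
  unfolding sector_unit_def
proof (rule the_equality)
  fix v
  assume v: "is_unit v \<and> in_sector (v * x)"
  obtain w where w: "is_unit w" "u * w = 1"
    using assms(1) by (rule is_unitE)
  have eq: "v * w * (u * x) = v * x"
    by (metis w(2) mult.assoc mult.left_commute mult_1_right)
  have "is_unit (v * w)"
    using v w(1) by (simp add: is_unit_mult_iff)
  moreover have "in_sector (v * w * (u * x))"
    unfolding eq using v by simp
  ultimately have "v * w = 1"
    by (rule in_sector_unit_multiple_unique[OF assms(2)])
  then show "v = u"
    using w(2) by (metis mult.commute mult_1_right mult.left_commute)
qed (use assms in simp)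

lemma sector_unit:
  assumes "x \<noteq> 0"
  shows "is_unit (sector_unit x)" "in_sector (sector_unit x * x)"
proof -
  obtain u where "is_unit u" "in_sector (u * x)"
    using in_sector_unit_multiple[OF assms] .
  then show "is_unit (sector_unit x)" "in_sector (sector_unit x * x)"
    using sector_unit_eqI by simp_all
qed

instantiation eis :: normalization_euclidean_semiring
begin

(* sector_unit 0 is unspecified, but normalize 0 = 0 regardless. *)
definition normalize_eis :: "eis \<Rightarrow> eis" where
  "normalize x = sector_unit x * x"

definition unit_factor_eis :: "eis \<Rightarrow> eis" where
  "unit_factor_eis x = x div normalize x"

lemma unit_factor_eis_unit:
  fixes x :: eis
  assumes "x \<noteq> 0"
  shows "is_unit (unit_factor x)" "unit_factor x * normalize x = x"
proof -
  obtain w where w: "is_unit w" "sector_unit x * w = 1"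
    using sector_unit(1)[OF assms] by (rule is_unitE)
  have "x = w * normalize x"
    by (metis w(2) normalize_eis_def mult.assoc mult.commute mult_1_right)
  moreover have "normalize x \<noteq> 0"
    using assms w(2) by (auto simp: normalize_eis_def)
  ultimately have "unit_factor x = w"
    unfolding unit_factor_eis_def by (metis nonzero_mult_div_cancel_right)
  with w(1) \<open>x = w * normalize x\<close> show "is_unit (unit_factor x)" "unit_factor x * normalize x = x"
    by simp_all
qed

lemma normalize_eis_unit_mult:
  fixes a b :: eis
  assumes "is_unit a"
  shows "normalize (a * b) = normalize b"
proof (cases "b = 0")
  case False
  obtain w where w: "is_unit w" "a * w = 1"
    using assms by (rule is_unitE)
  have eq: "sector_unit b * w * (a * b) = sector_unit b * b"
    by (metis w(2) mult.assoc mult.left_commute mult_1_right)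
  have "sector_unit (a * b) = sector_unit b * w"
  proof (rule sector_unit_eqI)
    show "is_unit (sector_unit b * w)"
      using sector_unit(1)[OF False] w(1) by (simp add: is_unit_mult_iff)
    show "in_sector (sector_unit b * w * (a * b))"
      unfolding eq by (rule sector_unit(2)[OF False])
  qed
  then show ?thesis
    by (metis eq normalize_eis_def mult.assoc)
qed (simp add: normalize_eis_def)

instance
proof
  fix a b :: eis
  show "unit_factor 0 = (0::eis)"
    by (simp add: unit_factor_eis_def)
  show "normalize 0 = (0::eis)"
    by (simp add: normalize_eis_def)
  show "unit_factor a * normalize a = a"
  proof (cases "a = 0")
    case True
    then show ?thesis
      by (simp add: unit_factor_eis_def normalize_eis_def)
  qed (rule unit_factor_eis_unit(2))
  show "is_unit (unit_factor a)" if "a \<noteq> 0"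
    using that by (rule unit_factor_eis_unit)
  show "unit_factor (a * b) = a * unit_factor b" if "is_unit a"
  proof (cases "b = 0")
    case False
    have "a * b div normalize b = a * (b div normalize b)"
      by (metis unit_factor_eis_unit(2)[OF False] unit_factor_eis_def mult.assoc
          nonzero_mult_div_cancel_right mult_zero_right False)
    then show ?thesis
      using that by (simp add: unit_factor_eis_def normalize_eis_unit_mult)
  qed (simp add: unit_factor_eis_def)
  show "unit_factor a = a" if "is_unit a"
  proof -
    have "normalize a = 1"
      unfolding normalize_eis_def
    proof (rule in_sector_unit_multiple_unique[of 1])
      show "in_sector (1::eis)"
        by (simp add: one_eis_def)
      have "a \<noteq> 0"
        using that by auto
      then show "is_unit (sector_unit a * a)" "in_sector (sector_unit a * a * 1)"
        using sector_unit[of a] that by (simp_all add: is_unit_mult_iff)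
    qed
    then show ?thesis
      by (simp add: unit_factor_eis_def)
  qed
qed

end

instantiation eis :: euclidean_ring_gcd
begin

definition gcd_eis :: "eis \<Rightarrow> eis \<Rightarrow> eis" where
  "gcd_eis = Euclidean_Algorithm.gcd"
definition lcm_eis :: "eis \<Rightarrow> eis \<Rightarrow> eis" where
  "lcm_eis = Euclidean_Algorithm.lcm"
definition Gcd_eis :: "eis set \<Rightarrow> eis" where
  "Gcd_eis = Euclidean_Algorithm.Gcd"
definition Lcm_eis :: "eis set \<Rightarrow> eis" where
  "Lcm_eis = Euclidean_Algorithm.Lcm"

instance
  by standard (simp_all add: gcd_eis_def lcm_eis_def Gcd_eis_def Lcm_eis_def)

end

lemma not_3_dvd_1_plus_eis_norm: "\<not> (3::int) dvd 1 + eis_norm x"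
proof (cases x)
  case (EI m n)
  define t r where "t = (m - n) div 3" and "r = (m - n) mod 3"
  have "m - n = 3 * t + r"
    by (simp add: t_def r_def)
  then have "1 + eis_norm x = (1 + r\<^sup>2) + (3 * t\<^sup>2 + 2 * t * r + m * n) * 3"
    by (simp add: EI power2_eq_square algebra_simps)
  then have "3 dvd 1 + eis_norm x \<longleftrightarrow> 3 dvd 1 + r\<^sup>2"
    by (simp only: dvd_add_times_triv_right_iff)
  moreover have "r \<in> {0, 1, 2}"
    unfolding r_def by auto
  ultimately show ?thesis
    by auto
qed

lemma normalize_eis_eq_self_iff: "normalize x = x \<longleftrightarrow> x = 0 \<or> in_sector x"
proof (cases "x = 0")
  case False
  have "in_sector x \<longleftrightarrow> sector_unit x = 1"
    using sector_unit[OF False] sector_unit_eqI[of 1 x] by auto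
  then show ?thesis
    using False by (auto simp: normalize_eis_def)
qed simp

lemma arg02_less_pi_div_3_iff:
  assumes "z \<noteq> 0"
  shows "arg02 z < pi / 3 \<longleftrightarrow> 0 \<le> Im z \<and> cmod z < 2 * Re z"
proof (cases "Im z < 0")
  case True
  then have "pi \<le> arg02 z"
    using Arg_neg_iff[of z] Arg_bounded[of z] by (simp add: arg02_def)
  then show ?thesis
    using True pi_gt_zero by linarith
next
  case False
  then have "0 \<le> Arg z" "arg02 z = Arg z"
    using Arg_neg_iff[of z] by (simp_all add: arg02_def)
  then have "arg02 z < pi / 3 \<longleftrightarrow> cos (pi / 3) < cos (Arg z)"
    by (simp add: Arg_le_pi cos_mono_less_eq)
  also have "\<dots> \<longleftrightarrow> cmod z < 2 * Re z"
    using assms by (simp add: cos_60 cos_Arg field_simps)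
  finally show ?thesis
    using False by simp
qed

lemma less_iff_power2_less:
  fixes a b :: real
  assumes "0 \<le> a"
  shows "a < b \<longleftrightarrow> 0 < b \<and> a\<^sup>2 < b\<^sup>2"
  using assms power2_less_imp_less[of a b] power_strict_mono[of a b 2] by auto

lemma cx_in_eis_A_iff: "cx x \<in> eis_A \<longleftrightarrow> in_sector x"
proof (cases x)
  case (EI m n)
  have "cx x \<in> eis_A \<longleftrightarrow> x \<noteq> 0 \<and> arg02 (cx x) < pi / 3"
    unfolding eis_A_def Eis_eq_range_cx arg02_def using Arg_bounded[of "cx x"] pi_gt_zero
    by (auto simp flip: cx_0)
  also have "\<dots> \<longleftrightarrow> x \<noteq> 0 \<and> 0 \<le> n \<and> 0 < 2 * m + n \<and> eis_norm x < (2 * m + n)\<^sup>2"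
  proof (cases "x = 0")
    case False
    have re: "2 * Re (cx x) = of_int (2 * m + n)" and im: "0 \<le> Im (cx x) \<longleftrightarrow> 0 \<le> n"
      unfolding EI Re_cx Im_cx by (simp_all add: zero_le_mult_iff)
    have "arg02 (cx x) < pi / 3 \<longleftrightarrow> 0 \<le> Im (cx x) \<and> cmod (cx x) < 2 * Re (cx x)"
      using False by (intro arg02_less_pi_div_3_iff) (simp flip: cx_0)
    also have "\<dots> \<longleftrightarrow> 0 \<le> n \<and> 0 < 2 * Re (cx x) \<and> (cmod (cx x))\<^sup>2 < (2 * Re (cx x))\<^sup>2"
      using less_iff_power2_less[OF norm_ge_zero, of "cx x" "2 * Re (cx x)"] by (simp only: im)
    also have "\<dots> \<longleftrightarrow> 0 \<le> n \<and> 0 < 2 * m + n \<and> eis_norm x < (2 * m + n)\<^sup>2"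
      unfolding re cmod_cx_sq by (simp only: of_int_power[symmetric] of_int_less_iff of_int_0_less_iff)
    finally show ?thesis
      using False by simp
  qed simp
  also have "\<dots> \<longleftrightarrow> 0 < m \<and> 0 \<le> n"
  proof -
    have "(2 * m + n)\<^sup>2 - eis_norm x = 3 * (m * (m + n))"
      by (simp add: EI power2_eq_square algebra_simps)
    then have "eis_norm x < (2 * m + n)\<^sup>2 \<longleftrightarrow> 0 < m * (m + n)"
      by linarith
    then show ?thesis
      by (auto simp: EI zero_eis_def zero_less_mult_iff simp del: eis_norm.simps)
  qed
  finally show ?thesis
    by (simp add: EI)
qed

lemma eis_dvd_cx_iff: "eis_dvd (cx a) (cx b) \<longleftrightarrow> a dvd b"
  by (auto simp: eis_dvd_def Eis_eq_range_cx dvd_def simp flip: cx_mult)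

lemma eis_unit_cx_iff: "eis_unit (cx u) \<longleftrightarrow> is_unit u"
  using eis_dvd_cx_iff[of u 1] by (simp add: eis_unit_def Eis_eq_range_cx)

lemma eis_rel_prime_cx_iff: "eis_rel_prime (cx a) (cx b) \<longleftrightarrow> coprime a b"
  by (auto simp: eis_rel_prime_def coprime_def Eis_eq_range_cx eis_dvd_cx_iff eis_unit_cx_iff)

lemma eis_diamond_cx_iff:
  assumes "z \<noteq> 0"
  shows "eis_diamond (cx a) (cx z) \<longleftrightarrow> a \<in> unitary_divisors z"
proof -
  have quotient: "cx z / cx a = cx c" if "z = a * c" "a \<noteq> 0" for c
    using that by (simp flip: cx_0)
  have "eis_diamond (cx a) (cx z) \<longleftrightarrow> a \<noteq> 0 \<and> in_sector a \<and> (\<exists>c. z = a * c \<and> coprime a c)"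
    using assms by (auto simp: eis_diamond_def cx_in_eis_A_iff eis_dvd_cx_iff dvd_def quotient
        eis_rel_prime_cx_iff simp flip: cx_0)
  also have "\<dots> \<longleftrightarrow> a \<in> unitary_divisors z"
    using assms by (auto simp: unitary_divisors_def normalize_eis_eq_self_iff)
  finally show ?thesis .
qed

lemma eis_diamond_set_eq:
  assumes "z \<noteq> 0"
  shows "{x. eis_diamond x (cx z)} = cx ` unitary_divisors z"
proof -
  have "x \<in> range cx" if "eis_diamond x (cx z)" for x
    using that by (auto simp: eis_diamond_def eis_A_def Eis_eq_range_cx)
  then show ?thesis
    using eis_diamond_cx_iff[OF assms] by blast
qed

lemma delta_star_2_cx:
  assumes "z \<noteq> 0"
  shows "delta_star 2 (cx z) = of_int (\<Sum>x\<in>unitary_divisors z. eis_norm x)"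
proof -
  have "delta_star 2 (cx z) = (\<Sum>x\<in>unitary_divisors z. (cmod (cx x))\<^sup>2)"
    unfolding delta_star_def eis_diamond_set_eq[OF assms]
    by (simp add: sum.reindex inj_on_def)
  then show ?thesis
    by (simp add: cmod_cx_sq)
qed

theorem theorem2p4:
  fixes a b :: int
  assumes "a > 0" and "b > 0" and "coprime a b" and "3 dvd a"
  shows "\<not> (\<exists>z\<in>Eis. z \<noteq> 0 \<and> I_star 2 z = of_int a / of_int b)"
proof
  assume "\<exists>z\<in>Eis. z \<noteq> 0 \<and> I_star 2 z = of_int a / of_int b"
  then obtain z where "z \<noteq> 0" and I: "I_star 2 (cx z) = of_int a / of_int b"
    by (auto simp: Eis_eq_range_cx simp flip: cx_0)
  define S where "S = (\<Sum>x\<in>unitary_divisors z. eis_norm x)"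
  have "\<not> 3 dvd S"
    unfolding S_def using eis_norm_mult is_unit_iff_eis_norm not_3_dvd_1_plus_eis_norm \<open>z \<noteq> 0\<close>
    by (intro prime_not_dvd_sum_unitary_divisors[THEN conjunct2]) auto
  have "of_int S / of_int (eis_norm z) = (of_int a / of_int b :: real)"
    using I \<open>z \<noteq> 0\<close> by (simp add: I_star_def delta_star_2_cx cmod_cx_sq S_def)
  moreover have "real_of_int (eis_norm z) \<noteq> 0" "real_of_int b \<noteq> 0"
    using \<open>z \<noteq> 0\<close> \<open>b > 0\<close> by simp_all
  ultimately have "real_of_int (S * b) = real_of_int (a * eis_norm z)"
    by (simp add: frac_eq_eq)
  then have "S * b = a * eis_norm z"
    by (rule of_int_eq_iff[THEN iffD1])
  then have "3 dvd S * b"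
    using \<open>3 dvd a\<close> by simp
  moreover have "\<not> 3 dvd b"
    using \<open>coprime a b\<close> \<open>3 dvd a\<close> coprime_common_divisor by fastforce
  ultimately show False
    using \<open>\<not> 3 dvd S\<close> by (simp add: prime_dvd_mult_iff)
qed

end
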